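(* For all $x,y\ge 1$ and $n>\max(x,y)$, the minimum possible number of edges in any task-dependency graph produced by the $(x,y)$ edge-removal process on $n$ vertices is $n-\min(x,y)$.
   Context: A task-dependency graph is a finite directed acyclic graph (no loops, no multiple edges). A vertex is initial if it has in-degree $0$ and terminal if it has out-degree $0$ (an isolated vertex is both). The $(x,y)$ edge-removal process on $n$ vertices: start with the task-dependency graph on $\{1,\dots,n\}$ having all edges $(a,b)$ with $a<b$. Edges are removed uniformly at random, one at a time; a removal that would cause more than $x$ initial vertices or more than $y$ terminal vertices is cancelled. The process terminates when no further edge can be removed; the produced graph is the final graph (over all possible runs). *)

theory Defs
  imports Main
begin

text \<open>A task-dependency graph on vertex set {1..n} is represented by its edge set,
  a set of pairs (a,b) meaning an edge a -> b.\<close>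

definition complete_dag :: "nat \<Rightarrow> (nat \<times> nat) set" where
  "complete_dag n = {(a, b). 1 \<le> a \<and> a < b \<and> b \<le> n}"

definition initial_vertices :: "nat \<Rightarrow> (nat \<times> nat) set \<Rightarrow> nat set" where
  "initial_vertices n E = {v \<in> {1..n}. \<not> (\<exists>u. (u, v) \<in> E)}"

definition terminal_vertices :: "nat \<Rightarrow> (nat \<times> nat) set \<Rightarrow> nat set" where
  "terminal_vertices n E = {v \<in> {1..n}. \<not> (\<exists>w. (v, w) \<in> E)}"

definition admissible :: "nat \<Rightarrow> nat \<Rightarrow> nat \<Rightarrow> (nat \<times> nat) set \<Rightarrow> bool" where
  "admissible x y n E \<longleftrightarrow> card (initial_vertices n E) \<le> x \<and> card (terminal_vertices n E) \<le> y"

text \<open>One (non-cancelled) step of the (x,y) edge-removal process.\<close>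
definition removal_step :: "nat \<Rightarrow> nat \<Rightarrow> nat \<Rightarrow> (nat \<times> nat) set \<Rightarrow> (nat \<times> nat) set \<Rightarrow> bool" where
  "removal_step x y n E E' \<longleftrightarrow> (\<exists>e \<in> E. E' = E - {e} \<and> admissible x y n E')"

definition final_graph :: "nat \<Rightarrow> nat \<Rightarrow> nat \<Rightarrow> (nat \<times> nat) set \<Rightarrow> bool" where
  "final_graph x y n E \<longleftrightarrow>
     (removal_step x y n)\<^sup>*\<^sup>* (complete_dag n) E \<and> \<not> (\<exists>E'. removal_step x y n E E')"

end

theory Submission
  imports Defs
begin

text \<open>
  A vertex of \<open>{1..n}\<close> that is not initial is the head of some edge, so a graph with at most
  \<open>x\<close> initial vertices has at least \<open>n - x\<close> edges; dually it has at least \<open>n - y\<close> edges.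
  Conversely, for \<open>m = min x y\<close> the graph with the edges \<open>a \<rightarrow> a + m\<close> has \<open>n - m\<close> edges,
  exactly \<open>m\<close> initial and \<open>m\<close> terminal vertices, and deleting an edge \<open>a \<rightarrow> a + m\<close> makes
  \<open>a + m\<close> initial and \<open>a\<close> terminal, so no further removal is possible. Since admissibility
  survives adding edges, this graph is reached from the complete graph by deleting the
  remaining edges one at a time.
\<close>

lemma finite_initial_vertices: "finite (initial_vertices n E)"
  unfolding initial_vertices_def by auto

lemma finite_terminal_vertices: "finite (terminal_vertices n E)"
  unfolding terminal_vertices_def by auto

lemma initial_vertices_antimono: "E \<subseteq> F \<Longrightarrow> initial_vertices n F \<subseteq> initial_vertices n E"
  unfolding initial_vertices_def by auto

lemma terminal_vertices_antimono: "E \<subseteq> F \<Longrightarrow> terminal_vertices n F \<subseteq> terminal_vertices n E"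
  unfolding terminal_vertices_def by auto

lemma admissible_mono: "admissible x y n E \<Longrightarrow> E \<subseteq> F \<Longrightarrow> admissible x y n F"
  unfolding admissible_def
  by (meson card_mono order_trans finite_initial_vertices finite_terminal_vertices
      initial_vertices_antimono terminal_vertices_antimono)

lemma finite_complete_dag: "finite (complete_dag n)"
proof (rule finite_subset)
  show "complete_dag n \<subseteq> {1..n} \<times> {1..n}"
    unfolding complete_dag_def by auto
qed simp

lemma admissible_complete_dag:
  assumes "x \<ge> 1" and "y \<ge> 1"
  shows "admissible x y n (complete_dag n)"
proof -
  have "initial_vertices n (complete_dag n) \<subseteq> {1}"
    unfolding initial_vertices_def complete_dag_def by force
  then have "card (initial_vertices n (complete_dag n)) \<le> card {1::nat}"
    by (rule card_mono[rotated]) simp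
  moreover have "terminal_vertices n (complete_dag n) \<subseteq> {n}"
    unfolding terminal_vertices_def complete_dag_def by force
  then have "card (terminal_vertices n (complete_dag n)) \<le> card {n}"
    by (rule card_mono[rotated]) simp
  ultimately show ?thesis
    using assms unfolding admissible_def by simp
qed

lemma removal_steps_subset_admissible:
  assumes "(removal_step x y n)\<^sup>*\<^sup>* F E" and "admissible x y n F"
  shows "E \<subseteq> F \<and> admissible x y n E"
  using assms(1)
proof (induction rule: rtranclp_induct)
  case base
  then show ?case using assms(2) by simp
next
  case (step E E')
  then show ?case unfolding removal_step_def by auto
qed

lemma removal_steps_to_admissible_subset:
  assumes "admissible x y n G" and "finite F" and "G \<subseteq> F"
  shows "(removal_step x y n)\<^sup>*\<^sup>* F G"
  using assms(2,3)
proof (induction "card (F - G)" arbitrary: F)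
  case 0
  then have "F = G" by auto
  then show ?case by simp
next
  case (Suc k)
  then obtain e where e: "e \<in> F - G"
    by (metis card.empty ex_in_conv nat.distinct(1))
  have smaller: "G \<subseteq> F - {e}"
    using Suc.prems(2) e by blast
  have "F - {e} - G = (F - G) - {e}"
    by blast
  then have "card (F - {e} - G) = k"
    using Suc.hyps(2) e by simp
  then have "(removal_step x y n)\<^sup>*\<^sup>* (F - {e}) G"
    using Suc.hyps(1)[of "F - {e}"] Suc.prems(1) smaller by simp
  moreover have "admissible x y n (F - {e})"
    using assms(1) smaller by (rule admissible_mono)
  then have "removal_step x y n F (F - {e})"
    using e unfolding removal_step_def by blast
  ultimately show ?case
    by (rule converse_rtranclp_into_rtranclp[rotated])
qed

lemma card_ge_n_minus_initial_vertices:
  assumes "finite E"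
  shows "n - card (initial_vertices n E) \<le> card E"
proof -
  have "{1..n} - initial_vertices n E \<subseteq> snd ` E"
    unfolding initial_vertices_def by force
  then have "card ({1..n} - initial_vertices n E) \<le> card E"
    using assms by (meson card_image_le card_mono finite_imageI order_trans)
  moreover have "card ({1..n} - initial_vertices n E) = n - card (initial_vertices n E)"
    by (subst card_Diff_subset) (auto simp: initial_vertices_def finite_initial_vertices)
  ultimately show ?thesis by simp
qed

lemma card_ge_n_minus_terminal_vertices:
  assumes "finite E"
  shows "n - card (terminal_vertices n E) \<le> card E"
proof -
  have "{1..n} - terminal_vertices n E \<subseteq> fst ` E"
    unfolding terminal_vertices_def by force
  then have "card ({1..n} - terminal_vertices n E) \<le> card E"
    using assms by (meson card_image_le card_mono finite_imageI order_trans)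
  moreover have "card ({1..n} - terminal_vertices n E) = n - card (terminal_vertices n E)"
    by (subst card_Diff_subset) (auto simp: terminal_vertices_def finite_terminal_vertices)
  ultimately show ?thesis by simp
qed

lemma final_graph_card_ge:
  assumes "final_graph x y n E" and "x \<ge> 1" and "y \<ge> 1"
  shows "n - min x y \<le> card E"
proof -
  have subset: "E \<subseteq> complete_dag n" and admissible: "admissible x y n E"
    using assms removal_steps_subset_admissible admissible_complete_dag
    unfolding final_graph_def by blast+
  have "finite E"
    using subset finite_complete_dag by (rule finite_subset)
  then have "n - x \<le> card E" and "n - y \<le> card E"
    using card_ge_n_minus_initial_vertices[of E n] card_ge_n_minus_terminal_vertices[of E n]
      admissible
    unfolding admissible_def by linarith+
  then show ?thesis by linarith
qed

definition shift_graph :: "nat \<Rightarrow> nat \<Rightarrow> (nat \<times> nat) set" where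
  "shift_graph n m = {(a, b). 1 \<le> a \<and> b = a + m \<and> b \<le> n}"

lemma shift_graph_subset_complete_dag: "m \<ge> 1 \<Longrightarrow> shift_graph n m \<subseteq> complete_dag n"
  unfolding shift_graph_def complete_dag_def by auto

lemma card_shift_graph: "card (shift_graph n m) = n - m"
proof -
  have "shift_graph n m = (\<lambda>a. (a, a + m)) ` {1..n - m}"
    unfolding shift_graph_def by auto
  moreover have "inj (\<lambda>a. (a, a + m))"
    by (auto intro: injI)
  ultimately show ?thesis
    by (simp add: card_image inj_on_subset)
qed

lemma has_in_edge_shift_graph: "(\<exists>u. (u, v) \<in> shift_graph n m) \<longleftrightarrow> m < v \<and> v \<le> n"
  unfolding shift_graph_def by (auto intro!: exI[of _ "v - m"])

lemma has_out_edge_shift_graph: "(\<exists>w. (v, w) \<in> shift_graph n m) \<longleftrightarrow> 1 \<le> v \<and> v + m \<le> n"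
  unfolding shift_graph_def by auto

lemma in_edge_shift_graph_unique: "(u, v) \<in> shift_graph n m \<Longrightarrow> u = v - m"
  unfolding shift_graph_def by auto

lemma out_edge_shift_graph_unique: "(v, w) \<in> shift_graph n m \<Longrightarrow> w = v + m"
  unfolding shift_graph_def by auto

lemma initial_vertices_shift_graph: "m < n \<Longrightarrow> initial_vertices n (shift_graph n m) = {1..m}"
  unfolding initial_vertices_def has_in_edge_shift_graph by auto

lemma terminal_vertices_shift_graph:
  "m < n \<Longrightarrow> terminal_vertices n (shift_graph n m) = {n - m + 1..n}"
  unfolding terminal_vertices_def has_out_edge_shift_graph by auto

lemma has_in_edge_shift_graph_remove:
  assumes "(a, b) \<in> shift_graph n m"
  shows "(\<exists>u. (u, v) \<in> shift_graph n m - {(a, b)}) \<longleftrightarrow> m < v \<and> v \<le> n \<and> v \<noteq> b"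
  using assms has_in_edge_shift_graph[of v n m] in_edge_shift_graph_unique[of _ v n m]
    in_edge_shift_graph_unique[OF assms] by auto

lemma has_out_edge_shift_graph_remove:
  assumes "(a, b) \<in> shift_graph n m"
  shows "(\<exists>w. (v, w) \<in> shift_graph n m - {(a, b)}) \<longleftrightarrow> 1 \<le> v \<and> v + m \<le> n \<and> v \<noteq> a"
  using assms has_out_edge_shift_graph[of v n m] out_edge_shift_graph_unique[of v _ n m]
    out_edge_shift_graph_unique[OF assms] by auto

lemma initial_vertices_shift_graph_remove:
  assumes "(a, b) \<in> shift_graph n m"
  shows "initial_vertices n (shift_graph n m - {(a, b)}) = insert b {1..m}"
proof -
  have "m < b" and "b \<le> n"
    using assms by (auto simp: shift_graph_def)
  then show ?thesis
    unfolding initial_vertices_def has_in_edge_shift_graph_remove[OF assms] by auto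
qed

lemma terminal_vertices_shift_graph_remove:
  assumes "(a, b) \<in> shift_graph n m"
  shows "terminal_vertices n (shift_graph n m - {(a, b)}) = insert a {n - m + 1..n}"
proof -
  have "1 \<le> a" and "a + m \<le> n"
    using assms by (auto simp: shift_graph_def)
  then show ?thesis
    unfolding terminal_vertices_def has_out_edge_shift_graph_remove[OF assms] by auto
qed

lemma no_removal_step_shift_graph:
  assumes "x \<le> m \<or> y \<le> m"
  shows "\<not> removal_step x y n (shift_graph n m) E"
proof
  assume "removal_step x y n (shift_graph n m) E"
  then obtain a b where edge: "(a, b) \<in> shift_graph n m"
    and admissible: "admissible x y n (shift_graph n m - {(a, b)})"
    unfolding removal_step_def by auto
  have "b \<notin> {1..m}" and "a \<notin> {n - m + 1..n}" and "m \<le> n"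
    using edge by (auto simp: shift_graph_def)
  then have "card (initial_vertices n (shift_graph n m - {(a, b)})) = m + 1"
    and "card (terminal_vertices n (shift_graph n m - {(a, b)})) = m + 1"
    by (simp_all add: initial_vertices_shift_graph_remove[OF edge]
        terminal_vertices_shift_graph_remove[OF edge])
  then show False
    using admissible assms unfolding admissible_def by linarith
qed

lemma final_graph_shift_graph:
  assumes "x \<ge> 1" and "y \<ge> 1" and "min x y < n"
  shows "final_graph x y n (shift_graph n (min x y))"
proof -
  let ?S = "shift_graph n (min x y)"
  have "admissible x y n ?S"
    using assms unfolding admissible_def
    by (simp add: initial_vertices_shift_graph terminal_vertices_shift_graph)
  then have "(removal_step x y n)\<^sup>*\<^sup>* (complete_dag n) ?S"
    using assms removal_steps_to_admissible_subset finite_complete_dag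
      shift_graph_subset_complete_dag by simp
  moreover have "\<not> removal_step x y n ?S E" for E
    by (rule no_removal_step_shift_graph) linarith
  ultimately show ?thesis
    unfolding final_graph_def by blast
qed

theorem mainTheorem6:
  fixes x y n :: nat
  assumes "x \<ge> 1" and "y \<ge> 1" and "n > max x y"
  shows "(\<exists>E. final_graph x y n E \<and> card E = n - min x y) \<and>
         (\<forall>E. final_graph x y n E \<longrightarrow> n - min x y \<le> card E)"
proof
  have "min x y < n"
    using assms(3) by (simp add: min_less_iff_disj)
  then have "final_graph x y n (shift_graph n (min x y))"
    by (rule final_graph_shift_graph[OF assms(1,2)])
  then show "\<exists>E. final_graph x y n E \<and> card E = n - min x y"
    by (intro exI[of _ "shift_graph n (min x y)"]) (simp add: card_shift_graph)
  show "\<forall>E. final_graph x y n E \<longrightarrow> n - min x y \<le> card E"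
    using final_graph_card_ge[OF _ assms(1,2)] by blast
qed

end
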